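(* Let $G$ be a locally precompact, sequentially complete topological group. Then every closed zero-dimensional metrizable subgroup of $G$ is discrete if and only if every compact metrizable zero-dimensional subgroup of $G$ is finite. In particular, these two conditions are equivalent for every locally countably compact topological group.
   Context: All topological groups are Hausdorff. A topological group is locally precompact if its completion with respect to the two-sided uniformity is locally compact; it is sequentially complete if every Cauchy sequence with respect to the two-sided uniformity converges in $G$; it is locally countably compact if some open neighbourhood of the identity has countably compact closure. A space is zero-dimensional if it has a base of clopen sets. *)

theory Defs
  imports "HOL-Analysis.Analysis" "HOL-Algebra.Group"
begin

definition topological_group :: "('a, 'b) monoid_scheme \<Rightarrow> 'a topology \<Rightarrow> bool" where
  "topological_group G T \<longleftrightarrow>
     group G \<and> topspace T = carrier G \<and> Hausdorff_space T \<and>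
     continuous_map (prod_topology T T) T (\<lambda>(x, y). x \<otimes>\<^bsub>G\<^esub> y) \<and>
     continuous_map T T (\<lambda>x. inv\<^bsub>G\<^esub> x)"

text \<open>Basic entourage ball of the two-sided uniformity determined by a neighbourhood V of 1:
  y is V-close to x iff x^-1 y \<in> V and y x^-1 \<in> V.\<close>
definition two_sided_ball :: "('a, 'b) monoid_scheme \<Rightarrow> 'a set \<Rightarrow> 'a \<Rightarrow> 'a set" where
  "two_sided_ball G V x =
     {y \<in> carrier G. inv\<^bsub>G\<^esub> x \<otimes>\<^bsub>G\<^esub> y \<in> V \<and> y \<otimes>\<^bsub>G\<^esub> inv\<^bsub>G\<^esub> x \<in> V}"

definition precompact_in :: "('a, 'b) monoid_scheme \<Rightarrow> 'a topology \<Rightarrow> 'a set \<Rightarrow> bool" where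
  "precompact_in G T A \<longleftrightarrow>
     A \<subseteq> carrier G \<and>
     (\<forall>V. openin T V \<and> \<one>\<^bsub>G\<^esub> \<in> V \<longrightarrow>
        (\<exists>F. finite F \<and> F \<subseteq> carrier G \<and> A \<subseteq> (\<Union>f\<in>F. two_sided_ball G V f)))"

text \<open>Locally precompact: some neighbourhood of the identity is precompact
  (equivalently, the two-sided (Raikov) completion is locally compact).\<close>
definition locally_precompact :: "('a, 'b) monoid_scheme \<Rightarrow> 'a topology \<Rightarrow> bool" where
  "locally_precompact G T \<longleftrightarrow>
     (\<exists>U. openin T U \<and> \<one>\<^bsub>G\<^esub> \<in> U \<and> precompact_in G T U)"

definition two_sided_cauchy :: "('a, 'b) monoid_scheme \<Rightarrow> 'a topology \<Rightarrow> (nat \<Rightarrow> 'a) \<Rightarrow> bool" where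
  "two_sided_cauchy G T x \<longleftrightarrow>
     (\<forall>n. x n \<in> carrier G) \<and>
     (\<forall>V. openin T V \<and> \<one>\<^bsub>G\<^esub> \<in> V \<longrightarrow>
        (\<exists>N. \<forall>m\<ge>N. \<forall>n\<ge>N. x n \<in> two_sided_ball G V (x m)))"

definition sequentially_complete :: "('a, 'b) monoid_scheme \<Rightarrow> 'a topology \<Rightarrow> bool" where
  "sequentially_complete G T \<longleftrightarrow>
     (\<forall>x. two_sided_cauchy G T x \<longrightarrow> (\<exists>l. limitin T x l sequentially))"

definition countably_compactin :: "'a topology \<Rightarrow> 'a set \<Rightarrow> bool" where
  "countably_compactin X S \<longleftrightarrow>
     S \<subseteq> topspace X \<and>
     (\<forall>\<U>. countable \<U> \<and> (\<forall>U\<in>\<U>. openin X U) \<and> S \<subseteq> \<Union>\<U>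
          \<longrightarrow> (\<exists>\<F>. finite \<F> \<and> \<F> \<subseteq> \<U> \<and> S \<subseteq> \<Union>\<F>))"

definition locally_countably_compact :: "('a, 'b) monoid_scheme \<Rightarrow> 'a topology \<Rightarrow> bool" where
  "locally_countably_compact G T \<longleftrightarrow>
     (\<exists>U. openin T U \<and> \<one>\<^bsub>G\<^esub> \<in> U \<and> countably_compactin T (T closure_of U))"

definition zero_dimensional :: "'a topology \<Rightarrow> bool" where
  "zero_dimensional X \<longleftrightarrow>
     (\<forall>U x. openin X U \<and> x \<in> U \<longrightarrow>
        (\<exists>V. openin X V \<and> closedin X V \<and> x \<in> V \<and> V \<subseteq> U))"

definition closed_zd_metrizable_subgroups_discrete :: "('a, 'b) monoid_scheme \<Rightarrow> 'a topology \<Rightarrow> bool" where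
  "closed_zd_metrizable_subgroups_discrete G T \<longleftrightarrow>
     (\<forall>H. subgroup H G \<and> closedin T H \<and> zero_dimensional (subtopology T H) \<and>
          metrizable_space (subtopology T H)
        \<longrightarrow> subtopology T H = discrete_topology H)"

definition compact_zd_metrizable_subgroups_finite :: "('a, 'b) monoid_scheme \<Rightarrow> 'a topology \<Rightarrow> bool" where
  "compact_zd_metrizable_subgroups_finite G T \<longleftrightarrow>
     (\<forall>H. subgroup H G \<and> compactin T H \<and> zero_dimensional (subtopology T H) \<and>
          metrizable_space (subtopology T H)
        \<longrightarrow> finite H)"

end

theory Submission
  imports Defs "HOL-Library.Diagonal_Subsequence"
begin

(* A compact subgroup of a Hausdorff group is closed and a compact discrete space is finite,
   which gives one implication.  For the converse let H be a closed, metrizable,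
   zero-dimensional subgroup.  By zero-dimensionality 1 has a neighbourhood W that is clopen
   in H and lies in a precompact neighbourhood (resp. in one with countably compact closure).
   Such a W is compact: in the first case a diagonal argument over a countable base of H at 1
   turns every sequence in W into a two-sided Cauchy subsequence, which converges by
   sequential completeness; in the second case countable compactness is compactness because
   H is metrizable.  By van Dantzig's argument the right stabiliser of W in H is a compact
   open subgroup; being metrizable and zero-dimensional it is finite, so 1 is isolated in H
   and H is discrete. *)

lemma zero_dimensional_subtopology:
  assumes "zero_dimensional X"
  shows "zero_dimensional (subtopology X S)"
  unfolding zero_dimensional_def
proof (intro allI impI)
  fix U x assume "openin (subtopology X S) U \<and> x \<in> U"
  then obtain Q where Q: "openin X Q" "U = Q \<inter> S" "x \<in> Q" "x \<in> S"
    by (auto simp: openin_subtopology)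
  then obtain V where V: "openin X V" "closedin X V" "x \<in> V" "V \<subseteq> Q"
    using assms unfolding zero_dimensional_def by blast
  then show "\<exists>V. openin (subtopology X S) V \<and> closedin (subtopology X S) V \<and> x \<in> V \<and> V \<subseteq> U"
    using Q by (intro exI[of _ "V \<inter> S"]) (auto simp: openin_subtopology closedin_subtopology)
qed

lemma zero_dimensional_closed_subspace_clopen_nbhd:
  assumes "zero_dimensional (subtopology X H)" "closedin X H" "openin X U" "x \<in> U" "x \<in> H"
  shows "\<exists>W. openin (subtopology X H) W \<and> closedin X W \<and> x \<in> W \<and> W \<subseteq> U \<inter> H"
proof -
  have "openin (subtopology X H) (U \<inter> H)"
    using assms(3) by (simp add: openin_subtopology_Int)
  then obtain W where "openin (subtopology X H) W" "closedin (subtopology X H) W" "x \<in> W" "W \<subseteq> U \<inter> H"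
    using assms(1,4,5) unfolding zero_dimensional_def by blast
  then show ?thesis
    using closedin_trans_full[OF _ assms(2)] by blast
qed

subsection \<open>Countable compactness\<close>

lemma countably_compactinD:
  assumes "countably_compactin X S" "countable \<U>" "\<And>U. U \<in> \<U> \<Longrightarrow> openin X U" "S \<subseteq> \<Union>\<U>"
  shows "\<exists>\<F>. finite \<F> \<and> \<F> \<subseteq> \<U> \<and> S \<subseteq> \<Union>\<F>"
  using assms unfolding countably_compactin_def by blast

lemma countably_compactin_closedin_subset:
  assumes cc: "countably_compactin X C" and "closedin X W" "W \<subseteq> C"
  shows "countably_compactin X W"
  unfolding countably_compactin_def
proof (intro conjI allI impI)
  show "W \<subseteq> topspace X" using assms(2) closedin_subset by blast
  fix \<U> assume \<U>: "countable \<U> \<and> (\<forall>U\<in>\<U>. openin X U) \<and> W \<subseteq> \<Union>\<U>"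
  have "C \<subseteq> \<Union>(insert (topspace X - W) \<U>)"
    using \<U> cc by (auto simp: countably_compactin_def)
  moreover have "openin X U" if "U \<in> insert (topspace X - W) \<U>" for U
    using that \<U> assms(2) by (auto simp: closedin_def)
  moreover have "countable (insert (topspace X - W) \<U>)" using \<U> by simp
  ultimately obtain \<F> where "finite \<F>" "\<F> \<subseteq> insert (topspace X - W) \<U>" "C \<subseteq> \<Union>\<F>"
    using countably_compactinD[OF cc] by metis
  then show "\<exists>\<F>. finite \<F> \<and> \<F> \<subseteq> \<U> \<and> W \<subseteq> \<Union>\<F>"
    using assms(3) by (intro exI[of _ "\<F> - {topspace X - W}"]) auto
qed

lemma countably_compactin_countable_no_limit_finite:
  assumes cc: "countably_compactin X S" and D: "D \<subseteq> S" "countable D"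
    and no_limit: "S \<inter> X derived_set_of D = {}"
  shows "finite D"
proof -
  have S: "S \<subseteq> topspace X" using cc by (simp add: countably_compactin_def)
  have "\<exists>U. openin X U \<and> x \<in> U \<and> U \<inter> D \<subseteq> {x}" if "x \<in> S" for x
  proof -
    have "x \<notin> X derived_set_of D" using no_limit that by blast
    then show ?thesis using S that unfolding in_derived_set_of by blast
  qed
  then obtain U where U: "\<And>x. x \<in> S \<Longrightarrow> openin X (U x) \<and> x \<in> U x \<and> U x \<inter> D \<subseteq> {x}"
    by metis
  define Q where "Q = \<Union>(U ` (S - D))"
  have Q: "openin X Q" "Q \<inter> D = {}"
    unfolding Q_def using U by fastforce+
  have "S \<subseteq> \<Union>(insert Q (U ` D))"
  proof
    fix x assume "x \<in> S"
    then show "x \<in> \<Union>(insert Q (U ` D))"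
      using U by (cases "x \<in> D") (auto simp: Q_def)
  qed
  moreover have "openin X C" if "C \<in> insert Q (U ` D)" for C
    using that Q(1) U D(1) by blast
  moreover have "countable (insert Q (U ` D))" using D(2) by simp
  ultimately obtain \<F> where \<F>: "finite \<F>" "\<F> \<subseteq> insert Q (U ` D)" "S \<subseteq> \<Union>\<F>"
    using countably_compactinD[OF cc] by metis
  have "finite (C \<inter> D)" if C: "C \<in> \<F>" for C
  proof -
    consider "C = Q" | x where "x \<in> D" "C = U x" using \<F>(2) C by blast
    then show ?thesis
    proof cases
      case 1
      then show ?thesis using Q(2) by simp
    next
      case 2
      then have "C \<inter> D \<subseteq> {x}" using U D(1) by blast
      then show ?thesis by (rule finite_subset) simp
    qed
  qed
  then have "finite (\<Union>C\<in>\<F>. C \<inter> D)" by (intro finite_UN_I[OF \<F>(1)])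
  moreover have "D \<subseteq> (\<Union>C\<in>\<F>. C \<inter> D)" using \<F>(3) D(1) by blast
  ultimately show "finite D" by (metis finite_subset)
qed

lemma countably_compactin_Bolzano_Weierstrass:
  assumes "countably_compactin X S" "A \<subseteq> S" "infinite A"
  shows "S \<inter> X derived_set_of A \<noteq> {}"
proof
  assume no_limit: "S \<inter> X derived_set_of A = {}"
  obtain D where D: "D \<subseteq> A" "countable D" "infinite D"
    using infinite_countable_subset'[OF assms(3)] by blast
  have "S \<inter> X derived_set_of D = {}"
    using no_limit derived_set_of_mono[OF D(1)] by blast
  then have "finite D"
    using countably_compactin_countable_no_limit_finite[OF assms(1) _ D(2)] D(1) assms(2) by blast
  then show False using D(3) by contradiction
qed

lemma countably_compactin_imp_compactin_metrizable:
  assumes "metrizable_space (subtopology X H)" "countably_compactin X W" "W \<subseteq> H"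
  shows "compactin X W"
proof -
  obtain M d where "Metric_space M d" and H: "subtopology X H = Metric_space.mtopology M d"
    using assms(1) metrizable_space_def by blast
  interpret Metric_space M d by fact
  have M: "M = topspace X \<inter> H"
    using H by (metis topspace_mtopology topspace_subtopology)
  have "compactin mtopology W"
    unfolding compactin_eq_Bolzano_Weierstrass
  proof (intro conjI allI impI)
    show "W \<subseteq> M"
      using assms(2,3) M by (auto simp: countably_compactin_def)
    fix A assume A: "A \<subseteq> W \<and> infinite A"
    then have "H \<inter> A = A" using assms(3) by blast
    then have "mtopology derived_set_of A = H \<inter> X derived_set_of A"
      unfolding H[symmetric] derived_set_of_subtopology by simp
    moreover have "W \<inter> X derived_set_of A \<noteq> {}"
      using countably_compactin_Bolzano_Weierstrass[OF assms(2)] A by blast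
    ultimately show "W \<inter> mtopology derived_set_of A \<noteq> {}"
      using assms(3) by blast
  qed
  then have "compactin (subtopology X H) W" by (simp add: H)
  then show ?thesis by (simp add: compactin_subtopology)
qed

lemma metrizable_subtopology_countable_nbhd_base:
  assumes "metrizable_space (subtopology X H)" "x \<in> topspace X" "x \<in> H"
  obtains Q :: "nat \<Rightarrow> 'a set"
  where "\<And>n. openin X (Q n)" "\<And>n. x \<in> Q n"
    "\<And>V. openin X V \<Longrightarrow> x \<in> V \<Longrightarrow> \<exists>n. Q n \<inter> H \<subseteq> V"
proof -
  obtain M d where "Metric_space M d" and H: "subtopology X H = Metric_space.mtopology M d"
    using assms(1) metrizable_space_def by blast
  interpret Metric_space M d by fact
  have xM: "x \<in> M" using assms H topspace_mtopology by (metis IntI topspace_subtopology)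
  have "\<exists>Q. openin X Q \<and> mball x (inverse (Suc n)) = Q \<inter> H" for n :: nat
    using openin_mball[of x "inverse (Suc n)"] unfolding H[symmetric] openin_subtopology by blast
  then obtain Q where Q: "\<And>n. openin X (Q n)" "\<And>n. mball x (inverse (Suc n)) = Q n \<inter> H"
    by metis
  have base: "\<exists>n. Q n \<inter> H \<subseteq> V" if V: "openin X V" "x \<in> V" for V
  proof -
    have "openin mtopology (V \<inter> H)"
      unfolding H[symmetric] using V(1) by (simp add: openin_subtopology_Int)
    then obtain r where "r > 0" "mball x r \<subseteq> V \<inter> H"
      using V(2) assms(3) unfolding openin_mtopology by blast
    moreover obtain n where "inverse (real (Suc n)) < r" using reals_Archimedean[OF \<open>r > 0\<close>] by blast
    ultimately show ?thesis
      using Q(2)[of n] mball_subset_concentric[of "inverse (Suc n)" r x] by auto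
  qed
  have "x \<in> Q n" for n
  proof -
    have "x \<in> mball x (inverse (Suc n))" using xM by simp
    then show ?thesis using Q(2)[of n] by blast
  qed
  then show thesis by (rule that[OF Q(1) _ base])
qed

subsection \<open>Precompactness\<close>

definition two_sided_small :: "('a, 'b) monoid_scheme \<Rightarrow> 'a set \<Rightarrow> 'a set \<Rightarrow> bool" where
  "two_sided_small G E Q \<longleftrightarrow>
     (\<forall>a\<in>E. \<forall>b\<in>E. inv\<^bsub>G\<^esub> a \<otimes>\<^bsub>G\<^esub> b \<in> Q \<and> a \<otimes>\<^bsub>G\<^esub> inv\<^bsub>G\<^esub> b \<in> Q)"

lemma (in group) two_sided_ball_small:
  assumes "two_sided_small G E Q" "f \<in> carrier G"
    and "x \<in> two_sided_ball G E f" "y \<in> two_sided_ball G E f"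
  shows "y \<in> two_sided_ball G Q x"
proof -
  have x: "x \<in> carrier G" "inv f \<otimes> x \<in> E" "x \<otimes> inv f \<in> E"
    and y: "y \<in> carrier G" "inv f \<otimes> y \<in> E" "y \<otimes> inv f \<in> E"
    using assms(3,4) by (auto simp: two_sided_ball_def)
  have "inv (inv f \<otimes> x) \<otimes> (inv f \<otimes> y) = inv x \<otimes> (f \<otimes> (inv f \<otimes> y))"
    using x y assms(2) by (simp add: inv_mult_group m_assoc)
  also have "\<dots> = inv x \<otimes> y"
    using y assms(2) by (simp add: m_assoc[symmetric])
  moreover have "(y \<otimes> inv f) \<otimes> inv (x \<otimes> inv f) = y \<otimes> (inv f \<otimes> (f \<otimes> inv x))"
    using x y assms(2) by (simp add: inv_mult_group m_assoc)
  moreover have "\<dots> = y \<otimes> inv x"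
    using x assms(2) by (simp add: m_assoc[symmetric])
  moreover have "inv (inv f \<otimes> x) \<otimes> (inv f \<otimes> y) \<in> Q" "(y \<otimes> inv f) \<otimes> inv (x \<otimes> inv f) \<in> Q"
    using assms(1) x y unfolding two_sided_small_def by blast+
  ultimately show ?thesis
    using y(1) unfolding two_sided_ball_def by simp
qed

lemma (in group) two_sided_cauchy_if_eventually_in_small_balls:
  assumes "subgroup H G" "range x \<subseteq> H"
    and small: "\<And>n. two_sided_small G (E n) (Q n)"
    and balls: "\<And>n. \<exists>f\<in>carrier G. \<forall>m>n. x m \<in> two_sided_ball G (E n) f"
    and base: "\<And>V. openin T V \<Longrightarrow> \<one> \<in> V \<Longrightarrow> \<exists>n. Q n \<inter> H \<subseteq> V"
  shows "two_sided_cauchy G T x"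
  unfolding two_sided_cauchy_def
proof (intro conjI allI impI)
  have xH: "x m \<in> H" for m using assms(2) by auto
  then show "x m \<in> carrier G" for m using subgroup.mem_carrier[OF assms(1)] by blast
  fix V assume "openin T V \<and> \<one> \<in> V"
  then obtain n where n: "Q n \<inter> H \<subseteq> V" using base by blast
  obtain f where f: "f \<in> carrier G" "\<And>m. m > n \<Longrightarrow> x m \<in> two_sided_ball G (E n) f"
    using balls by blast
  have "x k \<in> two_sided_ball G V (x m)" if "m > n" "k > n" for m k
  proof -
    have "x k \<in> two_sided_ball G (Q n) (x m)"
      using two_sided_ball_small[OF small f(1) f(2)[OF that(1)] f(2)[OF that(2)]] .
    moreover have "inv (x m) \<otimes> x k \<in> H" "x k \<otimes> inv (x m) \<in> H"
      using xH assms(1) by (simp_all add: subgroup.m_closed subgroup.m_inv_closed)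
    ultimately show ?thesis using n by (auto simp: two_sided_ball_def)
  qed
  then show "\<exists>N. \<forall>m\<ge>N. \<forall>k\<ge>N. x k \<in> two_sided_ball G V (x m)"
    by (metis Suc_le_eq)
qed

lemma precompact_in_subset:
  "precompact_in G T U \<Longrightarrow> W \<subseteq> U \<Longrightarrow> precompact_in G T W"
  unfolding precompact_in_def by (meson order.trans)

lemma precompact_in_subseq_in_ball:
  fixes \<sigma> :: "nat \<Rightarrow> 'a"
  assumes "precompact_in G T W" "range \<sigma> \<subseteq> W" "openin T E" "\<one>\<^bsub>G\<^esub> \<in> E"
  shows "\<exists>r :: nat \<Rightarrow> nat. \<exists>f\<in>carrier G. strict_mono r \<and> (\<forall>i. \<sigma> (r i) \<in> two_sided_ball G E f)"
proof -
  obtain F where F: "finite F" "F \<subseteq> carrier G" "W \<subseteq> (\<Union>f\<in>F. two_sided_ball G E f)"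
    using assms unfolding precompact_in_def by blast
  then have "UNIV = (\<Union>f\<in>F. {i. \<sigma> i \<in> two_sided_ball G E f})"
    using assms(2) by blast
  then have "infinite (\<Union>f\<in>F. {i. \<sigma> i \<in> two_sided_ball G E f})"
    by (metis infinite_UNIV_nat)
  then obtain f where f: "f \<in> F" "infinite {i. \<sigma> i \<in> two_sided_ball G E f}"
    using F(1) by (meson finite_UN_I)
  then obtain r :: "nat \<Rightarrow> nat" where "strict_mono r" "\<forall>i. \<sigma> (r i) \<in> two_sided_ball G E f"
    using infinite_enumerate by blast
  then show ?thesis
    using f(1) F(2) by blast
qed

lemma precompact_in_diagonal_subseq:
  fixes \<sigma> :: "nat \<Rightarrow> 'a" and E :: "nat \<Rightarrow> 'a set"
  assumes "precompact_in G T W" "range \<sigma> \<subseteq> W" "\<And>n. openin T (E n)" "\<And>n. \<one>\<^bsub>G\<^esub> \<in> E n"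
  shows "\<exists>\<delta> :: nat \<Rightarrow> nat. strict_mono \<delta> \<and>
           (\<forall>n. \<exists>f\<in>carrier G. \<forall>m>n. \<sigma> (\<delta> m) \<in> two_sided_ball G (E n) f)"
proof -
  define P where "P n s \<longleftrightarrow> (\<exists>f\<in>carrier G. \<forall>i. \<sigma> (s i) \<in> two_sided_ball G (E n) f)"
    for n and s :: "nat \<Rightarrow> nat"
  interpret subseqs P
  proof
    fix n and s :: "nat \<Rightarrow> nat"
    have "range (\<sigma> \<circ> s) \<subseteq> W" using assms(2) by auto
    then obtain r :: "nat \<Rightarrow> nat" and f where
      "strict_mono r" "f \<in> carrier G" "\<forall>i. (\<sigma> \<circ> s) (r i) \<in> two_sided_ball G (E n) f"
      using precompact_in_subseq_in_ball[OF assms(1) _ assms(3,4)] by blast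
    then show "\<exists>r. strict_mono r \<and> P n (s \<circ> r)"
      unfolding P_def by auto
  qed
  have "\<exists>f\<in>carrier G. \<forall>m>n. \<sigma> (diagseq m) \<in> two_sided_ball G (E n) f" for n
  proof -
    have "P n (diagseq \<circ> (+) (Suc n))"
      by (rule diagseq_holds) (auto simp: P_def)
    then obtain f where f: "f \<in> carrier G" "\<And>i. \<sigma> (diagseq (Suc n + i)) \<in> two_sided_ball G (E n) f"
      unfolding P_def by auto
    have "\<sigma> (diagseq m) \<in> two_sided_ball G (E n) f" if "m > n" for m
      using f(2)[of "m - Suc n"] that by simp
    then show ?thesis using f(1) by blast
  qed
  then show ?thesis using subseq_diagseq by blast
qed

definition right_stabiliser :: "('a, 'b) monoid_scheme \<Rightarrow> 'a set \<Rightarrow> 'a set \<Rightarrow> 'a set" where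
  "right_stabiliser G H K = {x \<in> H. \<forall>k\<in>K. k \<otimes>\<^bsub>G\<^esub> x \<in> K \<and> k \<otimes>\<^bsub>G\<^esub> inv\<^bsub>G\<^esub> x \<in> K}"

lemma (in group) subgroup_right_stabiliser:
  assumes "subgroup H G" "K \<subseteq> carrier G"
  shows "subgroup (right_stabiliser G H K) G"
proof
  show "right_stabiliser G H K \<subseteq> carrier G"
    using subgroup.subset[OF assms(1)] by (auto simp: right_stabiliser_def)
  show "\<one> \<in> right_stabiliser G H K"
    using subgroup.one_closed[OF assms(1)] assms(2) by (auto simp: right_stabiliser_def subsetD)
next
  fix x y assume x: "x \<in> right_stabiliser G H K" and y: "y \<in> right_stabiliser G H K"
  have c: "x \<in> carrier G" "y \<in> carrier G"
    using x y subgroup.mem_carrier[OF assms(1)] by (auto simp: right_stabiliser_def)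
  have "k \<otimes> (x \<otimes> y) \<in> K \<and> k \<otimes> inv (x \<otimes> y) \<in> K" if "k \<in> K" for k
    using x y that assms(2) c by (auto simp: right_stabiliser_def m_assoc[symmetric] inv_mult_group subsetD)
  then show "x \<otimes> y \<in> right_stabiliser G H K"
    using x y subgroup.m_closed[OF assms(1)] by (auto simp: right_stabiliser_def)
  show "inv x \<in> right_stabiliser G H K"
    using x c subgroup.m_inv_closed[OF assms(1)] by (auto simp: right_stabiliser_def)
qed

lemma (in group) right_stabiliser_subset:
  assumes "H \<subseteq> carrier G" "\<one> \<in> K"
  shows "right_stabiliser G H K \<subseteq> K"
proof
  fix x assume "x \<in> right_stabiliser G H K"
  then have "\<one> \<otimes> x \<in> K" "x \<in> carrier G" using assms by (auto simp: right_stabiliser_def)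
  then show "x \<in> K" by simp
qed

subsection \<open>Topological groups\<close>

locale topgroup = group G for G (structure) +
  fixes T :: "'a topology"
  assumes topological_group: "topological_group G T"
begin

lemma topspace_eq: "topspace T = carrier G"
  using topological_group by (simp add: topological_group_def)

lemma topspace_subtopology_subgroup: "subgroup H G \<Longrightarrow> topspace (subtopology T H) = H"
  using subgroup.subset by (auto simp: topspace_eq)

lemma continuous_map_mult:
  assumes "continuous_map X T f" "continuous_map X T g"
  shows "continuous_map X T (\<lambda>x. f x \<otimes> g x)"
proof -
  have "continuous_map X (prod_topology T T) (\<lambda>x. (f x, g x))"
    using assms by (simp add: continuous_map_paired)
  moreover have "continuous_map (prod_topology T T) T (\<lambda>(x, y). x \<otimes> y)"
    using topological_group by (simp add: topological_group_def)
  ultimately have "continuous_map X T ((\<lambda>(x, y). x \<otimes> y) \<circ> (\<lambda>x. (f x, g x)))"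
    by (rule continuous_map_compose)
  then show ?thesis by (simp add: o_def)
qed

lemma continuous_map_inv: "continuous_map T T (\<lambda>x. inv x)"
  using topological_group by (simp add: topological_group_def)

lemma continuous_map_inv_comp:
  "continuous_map X T f \<Longrightarrow> continuous_map X T (\<lambda>x. inv (f x))"
  using continuous_map_compose[OF _ continuous_map_inv] by (simp add: o_def)

lemma exists_two_sided_small_nbhd:
  assumes "openin T Q" "\<one> \<in> Q"
  shows "\<exists>E. openin T E \<and> \<one> \<in> E \<and> two_sided_small G E Q"
proof -
  define P where "P = {p \<in> topspace (prod_topology T T). inv (fst p) \<otimes> snd p \<in> Q}
    \<inter> {p \<in> topspace (prod_topology T T). fst p \<otimes> inv (snd p) \<in> Q}"
  have "continuous_map (prod_topology T T) T (\<lambda>p. inv (fst p) \<otimes> snd p)"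
    by (rule continuous_map_mult[OF continuous_map_inv_comp[OF continuous_map_fst] continuous_map_snd])
  moreover have "continuous_map (prod_topology T T) T (\<lambda>p. fst p \<otimes> inv (snd p))"
    by (rule continuous_map_mult[OF continuous_map_fst continuous_map_inv_comp[OF continuous_map_snd]])
  ultimately have "openin (prod_topology T T) P"
    unfolding P_def using assms(1) by (intro openin_Int openin_continuous_map_preimage)
  moreover have "(\<one>, \<one>) \<in> P"
    using assms(2) by (simp add: P_def topspace_eq)
  ultimately obtain A B where AB: "openin T A" "openin T B" "\<one> \<in> A" "\<one> \<in> B" "A \<times> B \<subseteq> P"
    by (metis openin_prod_topology_alt)
  have "(a, b) \<in> P" if "a \<in> A \<inter> B" "b \<in> A \<inter> B" for a b
    using AB(5) that by blast
  then have "two_sided_small G (A \<inter> B) Q"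
    unfolding two_sided_small_def P_def by simp
  then show ?thesis
    using AB(1-4) by (intro exI[of _ "A \<inter> B"]) auto
qed

lemma tube_lemma_mult:
  assumes "compactin T K" "openin T Q" "K \<subseteq> Q"
  shows "\<exists>V. openin T V \<and> \<one> \<in> V \<and> (\<forall>k\<in>K. \<forall>v\<in>V. k \<otimes> v \<in> Q)"
proof -
  define P where "P = {p \<in> topspace (prod_topology T T). fst p \<otimes> snd p \<in> Q}"
  have "openin (prod_topology T T) P"
    unfolding P_def using assms(2)
    by (rule openin_continuous_map_preimage[OF continuous_map_mult[OF continuous_map_fst continuous_map_snd]])
  moreover have "K \<subseteq> carrier G"
    using compactin_subset_topspace[OF assms(1)] by (simp add: topspace_eq)
  then have "K \<times> {\<one>} \<subseteq> P"
    using assms(3) by (auto simp: P_def topspace_eq subsetD)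
  ultimately obtain U V where "openin T V" "\<one> \<in> V" "U \<times> V \<subseteq> P" "K \<subseteq> U"
    using tube_lemma_left[OF _ assms(1)] by (metis one_closed topspace_eq)
  moreover have "k \<otimes> v \<in> Q" if "(k, v) \<in> P" for k v
    using that by (simp add: P_def)
  ultimately show ?thesis by blast
qed

lemma continuous_map_left_mult: "a \<in> carrier G \<Longrightarrow> continuous_map T T ((\<otimes>) a)"
  using continuous_map_mult[of T "\<lambda>_. a" "\<lambda>x. x"] by (simp add: topspace_eq id_def[symmetric])

lemma homeomorphic_map_left_translation:
  assumes "subgroup H G" "a \<in> H"
  shows "homeomorphic_map (subtopology T H) (subtopology T H) ((\<otimes>) a)"
proof -
  have H: "topspace (subtopology T H) = H"
    using topspace_subtopology_subgroup[OF assms(1)] .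
  have "continuous_map (subtopology T H) (subtopology T H) ((\<otimes>) b)" if "b \<in> H" for b
    unfolding continuous_map_in_subtopology H
    using that assms(1) continuous_map_from_subtopology[OF continuous_map_left_mult]
    by (auto simp: subgroup.m_closed subgroup.mem_carrier)
  then have "homeomorphic_maps (subtopology T H) (subtopology T H) ((\<otimes>) a) ((\<otimes>) (inv a))"
    using assms by (auto simp: homeomorphic_maps_def H subgroup.m_inv_closed subgroup.mem_carrier
        m_assoc[symmetric])
  then show ?thesis by (rule homeomorphic_maps_imp_map)
qed

lemma openin_left_translation:
  assumes "subgroup H G" "a \<in> H" "openin (subtopology T H) A"
  shows "openin (subtopology T H) ((\<otimes>) a ` A)"
  using homeomorphic_map_openness[OF homeomorphic_map_left_translation[OF assms(1,2)]]
    assms(3) openin_subset by blast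

lemma discrete_if_one_isolated:
  assumes "subgroup H G" "openin (subtopology T H) {\<one>}"
  shows "subtopology T H = discrete_topology H"
proof -
  have "openin (subtopology T H) {h}" if "h \<in> H" for h
    using openin_left_translation[OF assms(1) that assms(2)] that assms(1)
    by (simp add: subgroup.mem_carrier)
  moreover have "topspace (subtopology T H) = H"
    using topspace_subtopology_subgroup[OF assms(1)] .
  ultimately show ?thesis
    using discrete_topology_unique by metis
qed

lemma openin_subgroup_if_nbhd:
  assumes "subgroup H G" "subgroup S G" "S \<subseteq> H" "openin T N" "\<one> \<in> N" "N \<inter> H \<subseteq> S"
  shows "openin (subtopology T H) S"
proof -
  have S: "S = (\<Union>s\<in>S. (\<otimes>) s ` (N \<inter> H))"
  proof
    have "s \<in> (\<otimes>) s ` (N \<inter> H)" if "s \<in> S" for s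
    proof
      show "s = s \<otimes> \<one>" using that assms(2) by (simp add: subgroup.mem_carrier)
      show "\<one> \<in> N \<inter> H" using assms(5) subgroup.one_closed[OF assms(1)] by blast
    qed
    then show "S \<subseteq> (\<Union>s\<in>S. (\<otimes>) s ` (N \<inter> H))" by blast
    show "(\<Union>s\<in>S. (\<otimes>) s ` (N \<inter> H)) \<subseteq> S"
      using assms(6) subgroup.m_closed[OF assms(2)] by blast
  qed
  have "openin (subtopology T H) ((\<otimes>) s ` (N \<inter> H))" if "s \<in> S" for s
    using assms that by (intro openin_left_translation) (auto simp: openin_subtopology_Int)
  then have "openin (subtopology T H) (\<Union>s\<in>S. (\<otimes>) s ` (N \<inter> H))" by blast
  then show ?thesis using S by simp
qed

lemma closedin_open_subgroup:
  assumes "subgroup H G" "subgroup S G" "S \<subseteq> H" "openin (subtopology T H) S"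
  shows "closedin (subtopology T H) S"
proof -
  have "H - S = (\<Union>h\<in>H - S. (\<otimes>) h ` S)"
  proof
    have "h \<in> (\<otimes>) h ` S" if "h \<in> H" for h
    proof
      show "h = h \<otimes> \<one>" using that assms(1) by (simp add: subgroup.mem_carrier)
      show "\<one> \<in> S" using subgroup.one_closed[OF assms(2)] .
    qed
    then show "H - S \<subseteq> (\<Union>h\<in>H - S. (\<otimes>) h ` S)" by blast
    have "h \<otimes> s \<in> H - S" if "h \<in> H - S" "s \<in> S" for h s
    proof
      have c: "h \<in> carrier G" "s \<in> carrier G"
        using that assms(3) subgroup.mem_carrier[OF assms(1)] by auto
      show "h \<otimes> s \<in> H" using that assms(3) subgroup.m_closed[OF assms(1)] by auto
      show "h \<otimes> s \<notin> S"
      proof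
        assume "h \<otimes> s \<in> S"
        then have "h \<otimes> s \<otimes> inv s \<in> S"
          using that(2) assms(2) by (simp add: subgroup.m_closed subgroup.m_inv_closed)
        then show False using that(1) c by (simp add: m_assoc)
      qed
    qed
    then show "(\<Union>h\<in>H - S. (\<otimes>) h ` S) \<subseteq> H - S" by blast
  qed
  moreover have "openin (subtopology T H) ((\<otimes>) h ` S)" if "h \<in> H - S" for h
    using assms that by (intro openin_left_translation) auto
  then have "openin (subtopology T H) (\<Union>h\<in>H - S. (\<otimes>) h ` S)" by blast
  moreover have "topspace (subtopology T H) = H"
    using topspace_subtopology_subgroup[OF assms(1)] .
  ultimately show ?thesis using assms(3) by (simp add: closedin_def)
qed

lemma nbhd_subset_right_stabiliser:
  assumes "subgroup H G" "openin (subtopology T H) K" "compactin T K"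
  obtains N where "openin T N" "\<one> \<in> N" "N \<inter> H \<subseteq> right_stabiliser G H K"
proof -
  obtain Q where Q: "openin T Q" "K = Q \<inter> H"
    using assms(2) by (auto simp: openin_subtopology)
  then obtain V where V: "openin T V" "\<one> \<in> V" "\<forall>k\<in>K. \<forall>v\<in>V. k \<otimes> v \<in> Q"
    using tube_lemma_mult[OF assms(3)] by blast
  define N where "N = V \<inter> {x \<in> topspace T. inv x \<in> V}"
  have "openin T N"
    unfolding N_def using V(1) by (simp add: openin_Int openin_continuous_map_preimage[OF continuous_map_inv])
  moreover have "\<one> \<in> N"
    unfolding N_def using V(2) by (simp add: topspace_eq)
  moreover have "N \<inter> H \<subseteq> right_stabiliser G H K"
  proof
    fix x assume x: "x \<in> N \<inter> H"
    then have "inv x \<in> H" using subgroup.m_inv_closed[OF assms(1)] by blast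
    moreover have "x \<in> V" "inv x \<in> V" using x by (auto simp: N_def)
    ultimately show "x \<in> right_stabiliser G H K"
      using x V(3) Q(2) assms(1) by (auto simp: right_stabiliser_def subgroup.m_closed)
  qed
  ultimately show thesis by (rule that)
qed

lemma compact_open_subgroup_in_nbhd:
  assumes "subgroup H G" "openin (subtopology T H) K" "compactin T K" "\<one> \<in> K"
  obtains S where "subgroup S G" "S \<subseteq> K" "openin (subtopology T H) S" "compactin T S"
proof -
  define S where "S = right_stabiliser G H K"
  have H: "H \<subseteq> carrier G" using subgroup.subset[OF assms(1)] .
  have KH: "K \<subseteq> H" using openin_subset[OF assms(2)] by (simp add: topspace_subtopology_subgroup[OF assms(1)])
  have S: "subgroup S G" "S \<subseteq> K"
    unfolding S_def using subgroup_right_stabiliser[OF assms(1)] right_stabiliser_subset[OF H assms(4)] KH H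
    by auto
  obtain N where "openin T N" "\<one> \<in> N" "N \<inter> H \<subseteq> S"
    using nbhd_subset_right_stabiliser[OF assms(1-3)] unfolding S_def by blast
  then have "openin (subtopology T H) S"
    using openin_subgroup_if_nbhd[OF assms(1) S(1)] S(2) KH by blast
  moreover have "closedin (subtopology T H) S"
    using closedin_open_subgroup[OF assms(1) S(1) _ \<open>openin _ S\<close>] S(2) KH by blast
  then have "compactin T S"
    using closed_compactin[of "subtopology T H" K S] assms(3) S(2) KH by (simp add: compactin_subtopology)
  ultimately show thesis using S that by blast
qed

lemma discrete_if_finite_open_subgroup:
  assumes "subgroup H G" "subgroup S G" "S \<subseteq> H" "finite S" "openin (subtopology T H) S"
  shows "subtopology T H = discrete_topology H"
proof -
  have "t1_space (subtopology T H)"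
    using topological_group
    by (simp add: topological_group_def Hausdorff_imp_t1_space Hausdorff_space_subtopology)
  moreover have "S - {\<one>} \<subseteq> topspace (subtopology T H)"
    using assms(3) topspace_subtopology_subgroup[OF assms(1)] by blast
  ultimately have "closedin (subtopology T H) (S - {\<one>})"
    using assms(4) t1_space_closedin_finite by blast
  then have "openin (subtopology T H) (S - (S - {\<one>}))"
    by (rule openin_diff[OF assms(5)])
  moreover have "S - (S - {\<one>}) = {\<one>}"
    using subgroup.one_closed[OF assms(2)] by blast
  ultimately show ?thesis
    using discrete_if_one_isolated[OF assms(1)] by simp
qed

lemma discrete_if_compact_open_nbhd:
  assumes fin: "compact_zd_metrizable_subgroups_finite G T"
    and H: "subgroup H G" "zero_dimensional (subtopology T H)" "metrizable_space (subtopology T H)"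
    and W: "openin (subtopology T H) W" "\<one> \<in> W" "compactin T W"
  shows "subtopology T H = discrete_topology H"
proof -
  obtain S where S: "subgroup S G" "S \<subseteq> W" "openin (subtopology T H) S" "compactin T S"
    by (rule compact_open_subgroup_in_nbhd[OF H(1) W(1,3,2)])
  have "S \<subseteq> H" using S(2) openin_subset[OF W(1)] by auto
  then have "subtopology (subtopology T H) S = subtopology T S"
    by (simp add: subtopology_subtopology Int_absorb1)
  then have "zero_dimensional (subtopology T S)" "metrizable_space (subtopology T S)"
    using zero_dimensional_subtopology[OF H(2)] metrizable_space_subtopology[OF H(3)] by metis+
  then have "finite S"
    using fin S(1,4) unfolding compact_zd_metrizable_subgroups_finite_def by blast
  then show ?thesis
    using discrete_if_finite_open_subgroup[OF H(1) S(1) \<open>S \<subseteq> H\<close> _ S(3)] by blast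
qed

lemma compactin_if_precompact_closed:
  assumes sc: "sequentially_complete G T"
    and H: "subgroup H G" "metrizable_space (subtopology T H)"
    and W: "precompact_in G T W" "closedin T W" "W \<subseteq> H"
  shows "compactin T W"
proof -
  obtain M d where "Metric_space M d" and mH: "subtopology T H = Metric_space.mtopology M d"
    using H(2) metrizable_space_def by blast
  interpret Metric_space M d by fact
  have one: "\<one> \<in> topspace T" "\<one> \<in> H"
    using subgroup.one_closed[OF H(1)] by (auto simp: topspace_eq)
  obtain Q :: "nat \<Rightarrow> 'a set" where Q: "\<And>n. openin T (Q n)" "\<And>n. \<one> \<in> Q n"
    and base: "\<And>V. openin T V \<Longrightarrow> \<one> \<in> V \<Longrightarrow> \<exists>n. Q n \<inter> H \<subseteq> V"
    using metrizable_subtopology_countable_nbhd_base[OF H(2) one] by metis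
  obtain E where E: "\<And>n. openin T (E n)" "\<And>n. \<one> \<in> E n" "\<And>n. two_sided_small G (E n) (Q n)"
    using exists_two_sided_small_nbhd[OF Q] by metis
  have "compactin mtopology W"
    unfolding compactin_sequentially
  proof (intro conjI allI impI)
    show "W \<subseteq> M"
      using mH W(3) closedin_subset[OF W(2)] by (metis le_inf_iff topspace_mtopology topspace_subtopology)
    fix \<sigma> :: "nat \<Rightarrow> 'a" assume \<sigma>: "range \<sigma> \<subseteq> W"
    obtain \<delta> :: "nat \<Rightarrow> nat" where \<delta>: "strict_mono \<delta>"
      "\<And>n. \<exists>f\<in>carrier G. \<forall>m>n. (\<sigma> \<circ> \<delta>) m \<in> two_sided_ball G (E n) f"
      using precompact_in_diagonal_subseq[where E = E, OF W(1) \<sigma> E(1,2)] by auto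
    have "range (\<sigma> \<circ> \<delta>) \<subseteq> H" using \<sigma> W(3) by auto
    then have "two_sided_cauchy G T (\<sigma> \<circ> \<delta>)"
      using two_sided_cauchy_if_eventually_in_small_balls[OF H(1) _ E(3) \<delta>(2) base] by blast
    then obtain l where l: "limitin T (\<sigma> \<circ> \<delta>) l sequentially"
      using sc unfolding sequentially_complete_def by blast
    have "l \<in> W"
      using limitin_closedin[OF l W(2)] \<sigma> by (simp add: image_subset_iff)
    moreover have "limitin mtopology (\<sigma> \<circ> \<delta>) l sequentially"
      unfolding mH[symmetric] limitin_subtopology
      using l \<open>l \<in> W\<close> W(3) \<sigma> by (auto simp: image_subset_iff subsetD)
    ultimately show "\<exists>l r. l \<in> W \<and> strict_mono r \<and> limitin mtopology (\<sigma> \<circ> r) l sequentially"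
      using \<delta>(1) by blast
  qed
  then have "compactin (subtopology T H) W" by (simp add: mH)
  then show ?thesis by (simp add: compactin_subtopology)
qed

lemma closed_zd_metrizable_subgroups_discrete_imp_compact_finite:
  assumes "closed_zd_metrizable_subgroups_discrete G T"
  shows "compact_zd_metrizable_subgroups_finite G T"
  unfolding compact_zd_metrizable_subgroups_finite_def
proof (intro allI impI)
  fix H assume H: "subgroup H G \<and> compactin T H \<and> zero_dimensional (subtopology T H) \<and>
      metrizable_space (subtopology T H)"
  have "closedin T H"
    using H topological_group compactin_imp_closedin by (auto simp: topological_group_def)
  then have "subtopology T H = discrete_topology H"
    using assms H unfolding closed_zd_metrizable_subgroups_discrete_def by blast
  moreover have "compactin (subtopology T H) H"
    using H by (simp add: compactin_subtopology)
  ultimately show "finite H" by (simp add: compactin_discrete_topology)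
qed

lemma discrete_if_closed_subsets_of_nbhd_compact:
  assumes fin: "compact_zd_metrizable_subgroups_finite G T"
    and H: "subgroup H G" "closedin T H" "zero_dimensional (subtopology T H)"
      "metrizable_space (subtopology T H)"
    and U: "openin T U" "\<one> \<in> U"
    and compact: "\<And>W. closedin T W \<Longrightarrow> W \<subseteq> U \<inter> H \<Longrightarrow> compactin T W"
  shows "subtopology T H = discrete_topology H"
proof -
  obtain W where W: "openin (subtopology T H) W" "closedin T W" "\<one> \<in> W" "W \<subseteq> U \<inter> H"
    using zero_dimensional_closed_subspace_clopen_nbhd[OF H(3,2) U] subgroup.one_closed[OF H(1)] by blast
  then show ?thesis
    using discrete_if_compact_open_nbhd[OF fin H(1,3,4) W(1,3)] compact by blast
qed

lemma closed_zd_metrizable_subgroups_discrete_if_locally_precompact: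
  assumes "locally_precompact G T" "sequentially_complete G T"
    and fin: "compact_zd_metrizable_subgroups_finite G T"
  shows "closed_zd_metrizable_subgroups_discrete G T"
  unfolding closed_zd_metrizable_subgroups_discrete_def
proof (intro allI impI)
  fix H assume H: "subgroup H G \<and> closedin T H \<and> zero_dimensional (subtopology T H) \<and>
      metrizable_space (subtopology T H)"
  obtain U where U: "openin T U" "\<one> \<in> U" "precompact_in G T U"
    using assms(1) unfolding locally_precompact_def by blast
  have "compactin T W" if "closedin T W" "W \<subseteq> U \<inter> H" for W
    using compactin_if_precompact_closed[OF assms(2)] precompact_in_subset[OF U(3)] H that by blast
  then show "subtopology T H = discrete_topology H"
    using discrete_if_closed_subsets_of_nbhd_compact[OF fin _ _ _ _ U(1,2)] H by blast
qed

lemma closed_zd_metrizable_subgroups_discrete_if_locally_countably_compact: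
  assumes "locally_countably_compact G T"
    and fin: "compact_zd_metrizable_subgroups_finite G T"
  shows "closed_zd_metrizable_subgroups_discrete G T"
  unfolding closed_zd_metrizable_subgroups_discrete_def
proof (intro allI impI)
  fix H assume H: "subgroup H G \<and> closedin T H \<and> zero_dimensional (subtopology T H) \<and>
      metrizable_space (subtopology T H)"
  obtain U C where U: "openin T U" "\<one> \<in> U" "U \<subseteq> C" "countably_compactin T C"
    using assms(1) closure_of_subset openin_subset unfolding locally_countably_compact_def by metis
  have "compactin T W" if "closedin T W" "W \<subseteq> U \<inter> H" for W
  proof -
    have "countably_compactin T W"
      using countably_compactin_closedin_subset[OF U(4) that(1)] that(2) U(3) by blast
    then show ?thesis
      using countably_compactin_imp_compactin_metrizable H that(2) by blast
  qed
  then show "subtopology T H = discrete_topology H"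
    using discrete_if_closed_subsets_of_nbhd_compact[OF fin _ _ _ _ U(1,2)] H by blast
qed

end

theorem proposition2p15:
  shows "(\<forall>(G :: ('a, 'b) monoid_scheme) (T :: 'a topology).
            topological_group G T \<and> locally_precompact G T \<and> sequentially_complete G T
            \<longrightarrow> (closed_zd_metrizable_subgroups_discrete G T \<longleftrightarrow>
                 compact_zd_metrizable_subgroups_finite G T))
       \<and> (\<forall>(G :: ('a, 'b) monoid_scheme) (T :: 'a topology).
            topological_group G T \<and> locally_countably_compact G T
            \<longrightarrow> (closed_zd_metrizable_subgroups_discrete G T \<longleftrightarrow>
                 compact_zd_metrizable_subgroups_finite G T))"
proof (intro conjI allI impI)
  fix G :: "('a, 'b) monoid_scheme" and T :: "'a topology"
  assume A: "topological_group G T \<and> locally_precompact G T \<and> sequentially_complete G T"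
  then interpret topgroup G T
    by (simp add: topgroup_def topgroup_axioms_def topological_group_def)
  show "closed_zd_metrizable_subgroups_discrete G T \<longleftrightarrow> compact_zd_metrizable_subgroups_finite G T"
    using closed_zd_metrizable_subgroups_discrete_imp_compact_finite
      closed_zd_metrizable_subgroups_discrete_if_locally_precompact A by blast
next
  fix G :: "('a, 'b) monoid_scheme" and T :: "'a topology"
  assume A: "topological_group G T \<and> locally_countably_compact G T"
  then interpret topgroup G T
    by (simp add: topgroup_def topgroup_axioms_def topological_group_def)
  show "closed_zd_metrizable_subgroups_discrete G T \<longleftrightarrow> compact_zd_metrizable_subgroups_finite G T"
    using closed_zd_metrizable_subgroups_discrete_imp_compact_finite
      closed_zd_metrizable_subgroups_discrete_if_locally_countably_compact A by blast
qed

end
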